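(* Let $E$ be a graph, $K$ a field, $c=e_1e_2\cdots e_m$ an exclusive cycle in $E$, and $\mu=c^\infty$. Let $f(x)=1+a_1x+\dots+a_nx^n$ ($n\ge 1$, $a_i\in K$) be an irreducible polynomial in $K[x,x^{-1}]$ and $K'=K[x,x^{-1}]/(f(x))$. Let $V_{[\mu]}^f$ be the Ara–Rangaswamy simple left $L_K(E)$-module described in the context. Then $\mathrm{End}_{L_K(E)}(V_{[\mu]}^f)\cong K'$.
   Context: A graph $E=(E^0,E^1,r,s)$ consists of a vertex set $E^0$, an edge set $E^1$ and range/source maps $r,s:E^1\to E^0$. For a field $F$, the Leavitt path algebra $L_F(E)$ is the free associative $F$-algebra generated by $E^0\cup E^1\cup\{e^*:e\in E^1\}$ subject to: (V) $vv'=\delta_{v,v'}v$ for $v,v'\in E^0$; (E1) $s(e)e=er(e)=e$; (E2) $r(e)e^*=e^*s(e)=e^*$; (CK1) $e^*f=\delta_{e,f}r(e)$ for $e,f\in E^1$; (CK2) $v=\sum_{s(e)=v}ee^*$ for every vertex $v$ emitting a finite nonzero number of edges. A finite path is $e_1\cdots e_n$ with $r(e_i)=s(e_{i+1})$ (vertices are paths of length 0); for a path $\gamma=e_1\cdots e_n$, $\gamma^*=e_n^*\cdots e_1^*$. A cycle is a closed path $e_1\cdots e_n$ ($s(e_1)=r(e_n)$) with $s(e_i)\neq s(e_j)$ for $i\ne j$; it is exclusive if it shares no vertex with any other cycle (other than its own rotations). An infinite path is $e_1e_2\cdots$ with $r(e_i)=s(e_{i+1})$; for $n\ge1$, $\tau_{>n}(e_1e_2\cdots)=e_{n+1}e_{n+2}\cdots$,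 $\tau_{>0}$ is the identity. Two infinite paths $\mu,\eta$ are tail-equivalent if $\tau_{>m}(\mu)=\tau_{>n}(\eta)$ for some $m,n\ge0$; $[\mu]$ is the class of $\mu$. $V_{[\mu]}$ is the vector space with basis $[\mu]$, a left $L_F(E)$-module via: $v\cdot\eta=\eta$ if $v=s(\eta)$, else $0$; $e\cdot\eta=e\eta$ if $r(e)=s(\eta)$, else $0$; $e^*\cdot\eta=\tau_{>1}(\eta)$ if $\eta=e\eta'$, else $0$. Construction of $V_{[\mu]}^f$: let $\bar x$ be the image of $x$ in the field $K'$; let $\sigma$ be the $K'$-algebra automorphism of $L_{K'}(E)$ fixing all vertices and all $e,e^*$ with $e\neq e_1$, and sending $e_1\mapsto \bar x e_1$, $e_1^*\mapsto \bar x^{-1}e_1^*$. The twisted module $V_{[\mu]}^\sigma$ is $V_{[\mu]}$ (over $L_{K'}(E)$) as a vector space with action $a\cdot m=\sigma(a)m$. $V_{[\mu]}^f$ is $V_{[\mu]}^\sigma$ regarded as an $L_K(E)$-module by restriction of scalars along $L_K(E)\subseteq L_{K'}(E)$; it is a simple $L_K(E)$-module. *)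

theory Defs
  imports "HOL-Algebra.Polynomial_Divisibility"
begin

definition is_graph :: "'v set \<Rightarrow> 'e set \<Rightarrow> ('e \<Rightarrow> 'v) \<Rightarrow> ('e \<Rightarrow> 'v) \<Rightarrow> bool" where
  "is_graph E0 E1 r s \<longleftrightarrow> (\<forall>e\<in>E1. r e \<in> E0 \<and> s e \<in> E0)"

text \<open>Infinite paths e_1 e_2 ... are functions nat => edges (index 0 is the first edge).\<close>

definition inf_path :: "'e set \<Rightarrow> ('e \<Rightarrow> 'v) \<Rightarrow> ('e \<Rightarrow> 'v) \<Rightarrow> (nat \<Rightarrow> 'e) \<Rightarrow> bool" where
  "inf_path E1 r s p \<longleftrightarrow> (\<forall>i. p i \<in> E1 \<and> r (p i) = s (p (Suc i)))"

definition tail_from :: "nat \<Rightarrow> (nat \<Rightarrow> 'e) \<Rightarrow> (nat \<Rightarrow> 'e)" where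
  "tail_from n p = (\<lambda>i. p (i + n))"

definition cons_path :: "'e \<Rightarrow> (nat \<Rightarrow> 'e) \<Rightarrow> (nat \<Rightarrow> 'e)" where
  "cons_path e p = (\<lambda>i. case i of 0 \<Rightarrow> e | Suc j \<Rightarrow> p j)"

definition tail_equiv :: "(nat \<Rightarrow> 'e) \<Rightarrow> (nat \<Rightarrow> 'e) \<Rightarrow> bool" where
  "tail_equiv p q \<longleftrightarrow> (\<exists>m n. tail_from m p = tail_from n q)"

definition tail_class :: "'e set \<Rightarrow> ('e \<Rightarrow> 'v) \<Rightarrow> ('e \<Rightarrow> 'v) \<Rightarrow> (nat \<Rightarrow> 'e) \<Rightarrow> (nat \<Rightarrow> 'e) set" where
  "tail_class E1 r s mu = {p. inf_path E1 r s p \<and> tail_equiv p mu}"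

definition is_cycle :: "'e set \<Rightarrow> ('e \<Rightarrow> 'v) \<Rightarrow> ('e \<Rightarrow> 'v) \<Rightarrow> 'e list \<Rightarrow> bool" where
  "is_cycle E1 r s c \<longleftrightarrow> c \<noteq> [] \<and> set c \<subseteq> E1
     \<and> (\<forall>i. Suc i < length c \<longrightarrow> r (c ! i) = s (c ! Suc i))
     \<and> r (last c) = s (hd c) \<and> distinct (map s c)"

text \<open>Vertices of a (closed) path: its sources (the ranges are sources as well).\<close>

definition cycle_vertices :: "('e \<Rightarrow> 'v) \<Rightarrow> 'e list \<Rightarrow> 'v set" where
  "cycle_vertices s c = s ` set c"

definition exclusive_cycle :: "'e set \<Rightarrow> ('e \<Rightarrow> 'v) \<Rightarrow> ('e \<Rightarrow> 'v) \<Rightarrow> 'e list \<Rightarrow> bool" where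
  "exclusive_cycle E1 r s c \<longleftrightarrow> is_cycle E1 r s c \<and>
     (\<forall>d. is_cycle E1 r s d \<and> cycle_vertices s d \<inter> cycle_vertices s c \<noteq> {}
          \<longrightarrow> (\<exists>k. d = rotate k c))"

definition cycle_inf :: "'e list \<Rightarrow> (nat \<Rightarrow> 'e)" where
  "cycle_inf c = (\<lambda>i. c ! (i mod length c))"

text \<open>K' is the rupture field Rupt (carrier R) f = K[X]/(f).  The image of a scalar k of K,
  and the image xbar of the variable x.\<close>

definition Kemb :: "('a, 'b) ring_scheme \<Rightarrow> 'a list \<Rightarrow> 'a \<Rightarrow> 'a list set" where
  "Kemb R f k = (PIdl\<^bsub>poly_ring R\<^esub> f) +>\<^bsub>poly_ring R\<^esub> (ring.poly_of_const R k)"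

definition xbar :: "('a, 'b) ring_scheme \<Rightarrow> 'a list \<Rightarrow> 'a list set" where
  "xbar R f = (PIdl\<^bsub>poly_ring R\<^esub> f) +>\<^bsub>poly_ring R\<^esub> X\<^bsub>R\<^esub>"

text \<open>Elements of V^f: finite K'-linear combinations of elements of [mu], i.e. finitely supported
  coefficient functions on infinite paths, supported in [mu].\<close>

definition Vcarrier :: "('k, 'm) ring_scheme \<Rightarrow> (nat \<Rightarrow> 'e) set \<Rightarrow> ((nat \<Rightarrow> 'e) \<Rightarrow> 'k) set" where
  "Vcarrier Kq P = {phi. (\<forall>p. phi p \<in> carrier Kq) \<and> (\<forall>p. p \<notin> P \<longrightarrow> phi p = \<zero>\<^bsub>Kq\<^esub>)
                        \<and> finite {p. phi p \<noteq> \<zero>\<^bsub>Kq\<^esub>}}"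

definition vadd :: "('k, 'm) ring_scheme \<Rightarrow> ((nat \<Rightarrow> 'e) \<Rightarrow> 'k) \<Rightarrow> ((nat \<Rightarrow> 'e) \<Rightarrow> 'k) \<Rightarrow> ((nat \<Rightarrow> 'e) \<Rightarrow> 'k)" where
  "vadd Kq phi psi = (\<lambda>p. phi p \<oplus>\<^bsub>Kq\<^esub> psi p)"

definition vzero :: "('k, 'm) ring_scheme \<Rightarrow> ((nat \<Rightarrow> 'e) \<Rightarrow> 'k)" where
  "vzero Kq = (\<lambda>p. \<zero>\<^bsub>Kq\<^esub>)"

definition vsmul :: "('k, 'm) ring_scheme \<Rightarrow> 'k \<Rightarrow> ((nat \<Rightarrow> 'e) \<Rightarrow> 'k) \<Rightarrow> ((nat \<Rightarrow> 'e) \<Rightarrow> 'k)" where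
  "vsmul Kq a phi = (\<lambda>p. a \<otimes>\<^bsub>Kq\<^esub> phi p)"

text \<open>Twisted actions of the generators of L_K(E) on V^f (twist sigma: e1 |-> xbar e1,
  e1^* |-> xbar^{-1} e1^*, all other generators fixed), extended K'-linearly from the basis [mu]:
  v . eta = eta if v = s(eta), e . eta = e eta if r(e) = s(eta), e^* . eta = tau_{>1}(eta)
  if eta = e eta'.\<close>

definition act_vertex :: "('k, 'm) ring_scheme \<Rightarrow> ('e \<Rightarrow> 'v) \<Rightarrow> 'v \<Rightarrow> ((nat \<Rightarrow> 'e) \<Rightarrow> 'k) \<Rightarrow> ((nat \<Rightarrow> 'e) \<Rightarrow> 'k)" where
  "act_vertex Kq s v phi = (\<lambda>p. if s (p 0) = v then phi p else \<zero>\<^bsub>Kq\<^esub>)"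

definition act_edge :: "('k, 'm) ring_scheme \<Rightarrow> ('e \<Rightarrow> 'v) \<Rightarrow> ('e \<Rightarrow> 'v) \<Rightarrow> 'e \<Rightarrow> 'k \<Rightarrow> 'e
     \<Rightarrow> ((nat \<Rightarrow> 'e) \<Rightarrow> 'k) \<Rightarrow> ((nat \<Rightarrow> 'e) \<Rightarrow> 'k)" where
  "act_edge Kq r s e1 xb e phi =
     (\<lambda>p. if p 0 = e \<and> r e = s (p 1)
          then (if e = e1 then xb else \<one>\<^bsub>Kq\<^esub>) \<otimes>\<^bsub>Kq\<^esub> phi (tail_from 1 p)
          else \<zero>\<^bsub>Kq\<^esub>)"

definition act_ghost :: "('k, 'm) ring_scheme \<Rightarrow> 'e \<Rightarrow> 'k \<Rightarrow> 'e
     \<Rightarrow> ((nat \<Rightarrow> 'e) \<Rightarrow> 'k) \<Rightarrow> ((nat \<Rightarrow> 'e) \<Rightarrow> 'k)" where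
  "act_ghost Kq e1 xb e phi =
     (\<lambda>p. (if e = e1 then inv\<^bsub>Kq\<^esub> xb else \<one>\<^bsub>Kq\<^esub>) \<otimes>\<^bsub>Kq\<^esub> phi (cons_path e p))"

text \<open>The data of V^f for the given graph, cycle c = e_1 ... e_m (e_1 = hd c), mu = c^infinity.\<close>

definition Vf_carrier where
  "Vf_carrier R E1 r s c f = Vcarrier (Rupt\<^bsub>R\<^esub> (carrier R) f) (tail_class E1 r s (cycle_inf c))"

text \<open>L_K(E)-module endomorphisms of V^f: maps V^f -> V^f which are additive, K-linear and
  commute with the action of all generators v, e, e^* (v in E0, e in E1) of L_K(E).
  (Since L_K(E) is spanned over K by products of generators, this is exactly
  End_{L_K(E)}(V^f).)  Maps are taken extensional on the carrier.\<close>

definition Vf_End where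
  "Vf_End R E0 E1 r s c f =
    (let Kq = Rupt\<^bsub>R\<^esub> (carrier R) f; V = Vf_carrier R E1 r s c f;
         e1 = hd c; xb = xbar R f in
     {h. h \<in> V \<rightarrow> V \<and> h \<in> extensional V
       \<and> (\<forall>phi\<in>V. \<forall>psi\<in>V. h (vadd Kq phi psi) = vadd Kq (h phi) (h psi))
       \<and> (\<forall>k\<in>carrier R. \<forall>phi\<in>V. h (vsmul Kq (Kemb R f k) phi) = vsmul Kq (Kemb R f k) (h phi))
       \<and> (\<forall>v\<in>E0. \<forall>phi\<in>V. h (act_vertex Kq s v phi) = act_vertex Kq s v (h phi))
       \<and> (\<forall>e\<in>E1. \<forall>phi\<in>V. h (act_edge Kq r s e1 xb e phi) = act_edge Kq r s e1 xb e (h phi))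
       \<and> (\<forall>e\<in>E1. \<forall>phi\<in>V. h (act_ghost Kq e1 xb e phi) = act_ghost Kq e1 xb e (h phi))})"

definition Vf_End_ring where
  "Vf_End_ring R E0 E1 r s c f =
    (let Kq = Rupt\<^bsub>R\<^esub> (carrier R) f; V = Vf_carrier R E1 r s c f in
     \<lparr>carrier = Vf_End R E0 E1 r s c f,
      mult = (\<lambda>g h. compose V g h),
      one = (\<lambda>phi\<in>V. phi),
      zero = (\<lambda>phi\<in>V. vzero Kq),
      add = (\<lambda>g h. \<lambda>phi\<in>V. vadd Kq (g phi) (h phi))\<rparr>)"

end

(* Let h be an endomorphism of V^f. Since h commutes with the idempotents gamma gamma^* for
   the prefixes gamma of mu, the mu-coordinate of h psi depends only on the mu-coordinate of psi;
   this gives an additive map F(a) = (h (a mu))_mu on K'. F commutes with the scalars from K, and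
   with xbar^-1 because the ghost path c^* sends a mu to xbar^-1 a mu (e_1 occurs once in c).
   Since K' is generated as a ring by K and xbar, F(a) = a F(1). Every path of [mu] reaches mu
   along a ghost path, so h is multiplication by F(1), and h |-> F(1) is the isomorphism. *)

theory Submission
  imports Defs "HOL-Algebra.Generated_Rings"
begin

section \<open>Infinite paths\<close>

lemma tail_from_tail_from [simp]: "tail_from m (tail_from n p) = tail_from (m + n) p"
  by (simp add: tail_from_def add.assoc)

lemma tail_from_0 [simp]: "tail_from 0 p = p"
  by (simp add: tail_from_def)

lemma tail_from_Suc_cons_path [simp]: "tail_from (Suc m) (cons_path e p) = tail_from m p"
  by (simp add: tail_from_def cons_path_def)

lemma tail_from_1_cons_path [simp]: "tail_from 1 (cons_path e p) = p"
  using tail_from_Suc_cons_path[of 0] by simp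

lemma cons_path_tail_from: "p 0 = e \<Longrightarrow> cons_path e (tail_from 1 p) = p"
  by (auto simp add: tail_from_def cons_path_def fun_eq_iff split: nat.split)

lemma cons_path_tail_from_Suc: "cons_path (p N) (tail_from (Suc N) p) = tail_from N p"
  by (auto simp: fun_eq_iff cons_path_def tail_from_def split: nat.split)

lemma cycle_inf_period: "cycle_inf c (i + length c * n) = cycle_inf c i"
  by (simp add: cycle_inf_def)

lemma tail_from_cycle_inf: "tail_from (length c * n) (cycle_inf c) = cycle_inf c"
  by (simp add: tail_from_def fun_eq_iff cycle_inf_period)

lemma inf_path_cycle_inf:
  assumes "is_cycle E1 r s c"
  shows "inf_path E1 r s (cycle_inf c)"
  unfolding inf_path_def cycle_inf_def
proof
  fix i
  let ?L = "length c"
  have L: "0 < ?L" using assms by (simp add: is_cycle_def)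
  have "c ! (i mod ?L) \<in> set c" using L by simp
  then have edge: "c ! (i mod ?L) \<in> E1" using assms by (auto simp: is_cycle_def)
  have "r (c ! (i mod ?L)) = s (c ! (Suc i mod ?L))"
  proof (cases "Suc (i mod ?L) = ?L")
    case True
    then have "Suc i mod ?L = 0" by (simp add: mod_Suc)
    moreover have "c ! (i mod ?L) = last c" using True L
      by (metis diff_Suc_1 is_cycle_def assms last_conv_nth)
    moreover have "c ! 0 = hd c" using L by (simp add: hd_conv_nth)
    ultimately show ?thesis using assms by (simp add: is_cycle_def)
  next
    case False
    then have "Suc i mod ?L = Suc (i mod ?L)" by (simp add: mod_Suc)
    moreover have "Suc (i mod ?L) < ?L" using False L
      by (metis Suc_lessI mod_less_divisor)
    ultimately show ?thesis using assms by (simp add: is_cycle_def)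
  qed
  with edge show "c ! (i mod ?L) \<in> E1 \<and> r (c ! (i mod ?L)) = s (c ! (Suc i mod ?L))" by simp
qed

lemma cycle_inf_in_tail_class:
  "is_cycle E1 r s c \<Longrightarrow> cycle_inf c \<in> tail_class E1 r s (cycle_inf c)"
  using inf_path_cycle_inf by (auto simp: tail_class_def tail_equiv_def)

lemma tail_class_reaches_cycle_inf:
  assumes "is_cycle E1 r s c" and "p \<in> tail_class E1 r s (cycle_inf c)"
  shows "\<exists>N. tail_from N p = cycle_inf c"
proof -
  obtain m n where mn: "tail_from m p = tail_from n (cycle_inf c)"
    using assms(2) by (auto simp: tail_class_def tail_equiv_def)
  have "n \<le> length c * n" using assms(1) by (cases c) (auto simp: is_cycle_def)
  then obtain t where t: "t + n = length c * n" using le_add_diff_inverse2 by blast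
  have "tail_from (t + m) p = tail_from t (tail_from m p)" by simp
  also have "\<dots> = tail_from (length c * n) (cycle_inf c)" by (simp add: mn t)
  also have "\<dots> = cycle_inf c" by (rule tail_from_cycle_inf)
  finally show ?thesis by blast
qed

lemma tail_class_tail_from:
  assumes "p \<in> tail_class E1 r s mu"
  shows "tail_from 1 p \<in> tail_class E1 r s mu"
proof -
  obtain m n where "tail_from m p = tail_from n mu"
    using assms by (auto simp: tail_class_def tail_equiv_def)
  then have "tail_from m (tail_from 1 p) = tail_from (Suc n) mu"
    by (metis add.commute plus_1_eq_Suc tail_from_tail_from)
  then have "tail_equiv (tail_from 1 p) mu" unfolding tail_equiv_def by blast
  with assms show ?thesis by (auto simp: tail_class_def inf_path_def tail_from_def)
qed

lemma tail_class_cons_path: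
  assumes "p \<in> tail_class E1 r s mu" and "e \<in> E1" and "r e = s (p 0)"
  shows "cons_path e p \<in> tail_class E1 r s mu"
proof -
  obtain m n where "tail_from m p = tail_from n mu"
    using assms(1) by (auto simp: tail_class_def tail_equiv_def)
  then have "tail_from (Suc m) (cons_path e p) = tail_from n mu" by simp
  then have "tail_equiv (cons_path e p) mu" unfolding tail_equiv_def by blast
  with assms show ?thesis
    by (auto simp: tail_class_def tail_equiv_def inf_path_def cons_path_def split: nat.split)
qed

lemma tail_class_cons_pathD:
  "cons_path e p \<in> tail_class E1 r s mu \<Longrightarrow> p \<in> tail_class E1 r s mu"
  using tail_class_tail_from[of "cons_path e p"] by simp

lemma finite_paths_separated_by_prefix:
  fixes mu :: "nat \<Rightarrow> 'e"
  assumes "finite S" and "mu \<notin> S"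
  shows "\<exists>n. \<forall>q\<in>S. \<exists>i<n. q i \<noteq> mu i"
proof -
  have "\<forall>q\<in>S. \<exists>i. q i \<noteq> mu i" using assms(2) by (metis ext)
  then obtain d where d: "\<forall>q\<in>S. q (d q) \<noteq> mu (d q)" by (rule bchoice[elim_format]) blast
  obtain n where "\<forall>i\<in>d ` S. i < n"
    using finite_nat_set_iff_bounded finite_imageI[OF assms(1)] by blast
  with d show ?thesis by blast
qed

section \<open>Rupture fields\<close>

lemma (in ring) eval_in_subring:
  assumes "subring S R" and "set p \<subseteq> S" and "x \<in> S"
  shows "eval p x \<in> S"
  using ring.eval_in_carrier[OF subring_is_ring[OF assms(1)]] eval_consistent[OF assms(1)] assms(2,3)
  by simp

lemma (in domain) rupture_surj_eq_eval:
  assumes "subring K R" and "p \<in> carrier (K[X])" and "q \<in> carrier (K[X])"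
  shows "rupture_surj K p q
           = ring.eval (Rupt K p) (map (rupture_surj K p \<circ> poly_of_const) q) (rupture_surj K p X)"
proof -
  interpret UP: domain "K[X]" using univ_poly_is_domain[OF assms(1)] .
  interpret Hom: ring_hom_ring "K[X]" "Rupt K p" "rupture_surj K p"
    using rupture_surj_hom(2)[OF assms(1,2)] .
  have "Hom.S.eval (map (rupture_surj K p \<circ> poly_of_const) q) (rupture_surj K p X)
      = rupture_surj K p (UP.eval (map poly_of_const q) X)"
    using Hom.eval_hom[OF UP.carrier_is_subring var_closed(1)[OF assms(1)]
          map_norm_in_poly_ring_carrier[OF assms(1,3)]] by simp
  also have "\<dots> = rupture_surj K p q"
    using eval_rewrite[OF assms(1,3)] by simp
  finally show ?thesis by simp
qed

lemma (in domain) rupture_generated_by_X: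
  assumes "subring K R" and "p \<in> carrier (K[X])"
  shows "carrier (Rupt K p) \<subseteq> generate_ring (Rupt K p)
           (insert (rupture_surj K p X) ((rupture_surj K p \<circ> poly_of_const) ` K))"
    (is "_ \<subseteq> generate_ring _ ?H")
proof
  interpret Hom: ring_hom_ring "K[X]" "Rupt K p" "rupture_surj K p"
    using rupture_surj_hom(2)[OF assms] .
  have H: "?H \<subseteq> carrier (Rupt K p)"
    using ring_hom_memE(1)[OF rupture_surj_norm_is_hom[OF assms]]
          Hom.hom_closed[OF var_closed(1)[OF assms(1)]] by auto
  fix a assume "a \<in> carrier (Rupt K p)"
  then obtain q where q: "q \<in> carrier (K[X])" and a: "a = rupture_surj K p q"
    unfolding rupture_def FactRing_def A_RCOSETS_def' by auto
  have "set q \<subseteq> K"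
    using q by (auto simp: univ_poly_def polynomial_def)
  then have "set (map (rupture_surj K p \<circ> poly_of_const) q) \<subseteq> generate_ring (Rupt K p) ?H"
    by (auto intro!: generate_ring.incl)
  then show "a \<in> generate_ring (Rupt K p) ?H"
    unfolding a rupture_surj_eq_eval[OF assms q]
    by (intro Hom.S.eval_in_subring Hom.S.generate_ring_is_subring[OF H])
       (auto intro: generate_ring.incl)
qed

lemma (in domain) rupture_X_nonzero:
  assumes "subring K R" and "p \<in> carrier (K[X])" and "p \<noteq> []" and "last p = \<one>"
    and "\<one>\<^bsub>Rupt K p\<^esub> \<noteq> \<zero>\<^bsub>Rupt K p\<^esub>"
  shows "rupture_surj K p X \<noteq> \<zero>\<^bsub>Rupt K p\<^esub>"
proof
  interpret Hom: ring_hom_ring "K[X]" "Rupt K p" "rupture_surj K p"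
    using rupture_surj_hom(2)[OF assms(1,2)] .
  let ?p' = "map (rupture_surj K p \<circ> poly_of_const) p"
  have p': "set ?p' \<subseteq> carrier (Rupt K p)"
    using ring_hom_memE(1)[OF rupture_surj_norm_is_hom[OF assms(1,2)]] assms(2)
    by (auto simp: univ_poly_def polynomial_def)
  have "set (butlast ?p') \<subseteq> carrier (Rupt K p)"
    using p' by (meson in_set_butlastD subset_iff)
  moreover have "last ?p' \<in> carrier (Rupt K p)"
    using p' assms(3) last_in_set[of ?p'] by blast
  ultimately have "Hom.S.const_term (butlast ?p' @ [last ?p']) = last ?p'"
    by (rule Hom.S.const_term_eq_last)
  then have "Hom.S.eval ?p' \<zero>\<^bsub>Rupt K p\<^esub> = last ?p'"
    using assms(3) by (metis Hom.S.const_term_def append_butlast_last_id Nil_is_map_conv)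
  moreover have "last ?p' = \<one>\<^bsub>Rupt K p\<^esub>"
    using assms(3,4) Hom.hom_one
    by (simp add: last_map poly_of_const_def univ_poly_one)
  ultimately have eval_zero: "Hom.S.eval ?p' \<zero>\<^bsub>Rupt K p\<^esub> = \<one>\<^bsub>Rupt K p\<^esub>"
    by simp
  assume "rupture_surj K p X = \<zero>\<^bsub>Rupt K p\<^esub>"
  then have "Hom.S.eval ?p' \<zero>\<^bsub>Rupt K p\<^esub> = \<zero>\<^bsub>Rupt K p\<^esub>"
    using polynomial_rupture[OF assms(1,2)] by simp
  with eval_zero assms(5) show False by simp
qed

section \<open>Endomorphisms of the twisted module\<close>

definition (in ring) linear_scalars :: "('a \<Rightarrow> 'a) \<Rightarrow> 'a set" where
  "linear_scalars F = {a \<in> carrier R. \<forall>y\<in>carrier R. F (a \<otimes> y) = a \<otimes> F y}"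

lemma (in ring) linear_scalars_subring:
  assumes closed: "\<And>a. a \<in> carrier R \<Longrightarrow> F a \<in> carrier R"
    and additive: "\<And>a b. a \<in> carrier R \<Longrightarrow> b \<in> carrier R \<Longrightarrow> F (a \<oplus> b) = F a \<oplus> F b"
  shows "subring (linear_scalars F) R"
proof (rule subringI)
  have "F \<zero> = \<zero>"
    using additive[of \<zero> \<zero>] closed[of \<zero>] by (metis add.r_cancel_one' zero_closed l_zero)
  then have neg: "F (\<ominus> a) = \<ominus> F a" if "a \<in> carrier R" for a
    using additive[of a "\<ominus> a"] closed that by (metis a_inv_closed add.inv_equality r_neg)
  show "\<ominus> a \<in> linear_scalars F" if "a \<in> linear_scalars F" for a
    using that closed neg by (auto simp: linear_scalars_def l_minus)
  show "a \<otimes> b \<in> linear_scalars F" if "a \<in> linear_scalars F" "b \<in> linear_scalars F" for a b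
    using that closed by (auto simp: linear_scalars_def m_assoc)
  show "a \<oplus> b \<in> linear_scalars F" if "a \<in> linear_scalars F" "b \<in> linear_scalars F" for a b
    using that closed additive by (auto simp: linear_scalars_def l_distr)
qed (use closed in \<open>auto simp: linear_scalars_def\<close>)

lemma (in ring) linear_scalars_if_inv:
  assumes closed: "\<And>a. a \<in> carrier R \<Longrightarrow> F a \<in> carrier R"
    and a: "a \<in> Units R" and inv: "inv a \<in> linear_scalars F"
  shows "a \<in> linear_scalars F"
  unfolding linear_scalars_def
proof (intro CollectI conjI ballI)
  show ac: "a \<in> carrier R" using a by blast
  fix y assume y: "y \<in> carrier R"
  have "inv a \<otimes> (a \<otimes> y) = y"
    using a y by (simp add: m_assoc[symmetric] Units_closed)
  moreover have "F (inv a \<otimes> (a \<otimes> y)) = inv a \<otimes> F (a \<otimes> y)"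
    using inv ac y by (simp add: linear_scalars_def)
  ultimately have "F y = inv a \<otimes> F (a \<otimes> y)" by simp
  then show "F (a \<otimes> y) = a \<otimes> F y"
    using ac y a closed by (simp add: m_assoc[symmetric])
qed

text \<open>Here \<open>K\<close> plays the role of \<open>K'\<close>, \<open>xb\<close> of \<open>xbar\<close> and \<open>base\<close> of the image of the base
  field; of \<open>K' = K[x]/(f)\<close> only the generation hypothesis is used.\<close>

locale cycle_module = field K for K (structure) +
  fixes E0 :: "'v set" and E1 :: "'e set" and r s :: "'e \<Rightarrow> 'v" and c :: "'e list"
    and xb :: 'a and base :: "'a set"
  assumes cycle: "is_cycle E1 r s c"
    and xb_closed: "xb \<in> carrier K" and xb_nonzero: "xb \<noteq> \<zero>"
    and base_closed: "base \<subseteq> carrier K"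
    and generated: "carrier K \<subseteq> generate_ring K (insert xb base)"
begin

abbreviation "mu \<equiv> cycle_inf c"
abbreviation "P \<equiv> tail_class E1 r s mu"
abbreviation "V \<equiv> Vcarrier K P"
abbreviation "e1 \<equiv> hd c"
abbreviation "edge \<equiv> act_edge K r s e1 xb"
abbreviation "ghost \<equiv> act_ghost K e1 xb"

definition is_endo :: "(((nat \<Rightarrow> 'e) \<Rightarrow> 'a) \<Rightarrow> ((nat \<Rightarrow> 'e) \<Rightarrow> 'a)) \<Rightarrow> bool" where
  "is_endo h \<longleftrightarrow> h \<in> V \<rightarrow> V \<and> h \<in> extensional V
       \<and> (\<forall>phi\<in>V. \<forall>psi\<in>V. h (vadd K phi psi) = vadd K (h phi) (h psi))
       \<and> (\<forall>k\<in>base. \<forall>phi\<in>V. h (vsmul K k phi) = vsmul K k (h phi))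
       \<and> (\<forall>v\<in>E0. \<forall>phi\<in>V. h (act_vertex K s v phi) = act_vertex K s v (h phi))
       \<and> (\<forall>e\<in>E1. \<forall>phi\<in>V. h (edge e phi) = edge e (h phi))
       \<and> (\<forall>e\<in>E1. \<forall>phi\<in>V. h (ghost e phi) = ghost e (h phi))"

definition End_ring where
  "End_ring = \<lparr>carrier = {h. is_endo h}, mult = (\<lambda>g h. compose V g h), one = (\<lambda>phi\<in>V. phi),
     zero = (\<lambda>phi\<in>V. vzero K), add = (\<lambda>g h. \<lambda>phi\<in>V. vadd K (g phi) (h phi))\<rparr>"

definition single_mu :: "'a \<Rightarrow> (nat \<Rightarrow> 'e) \<Rightarrow> 'a" where
  "single_mu a = (\<lambda>q. if q = mu then a else \<zero>)"

definition mu_coeff :: "(((nat \<Rightarrow> 'e) \<Rightarrow> 'a) \<Rightarrow> ((nat \<Rightarrow> 'e) \<Rightarrow> 'a)) \<Rightarrow> 'a \<Rightarrow> 'a" where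
  "mu_coeff h a = h (single_mu a) mu"

definition scalar_endo :: "'a \<Rightarrow> ((nat \<Rightarrow> 'e) \<Rightarrow> 'a) \<Rightarrow> ((nat \<Rightarrow> 'e) \<Rightarrow> 'a)" where
  "scalar_endo a = restrict (vsmul K a) V"

lemma is_endoD:
  assumes "is_endo h"
  shows "\<And>phi. phi \<in> V \<Longrightarrow> h phi \<in> V"
    and "\<And>phi. phi \<notin> V \<Longrightarrow> h phi = undefined"
    and "\<And>phi psi. phi \<in> V \<Longrightarrow> psi \<in> V \<Longrightarrow> h (vadd K phi psi) = vadd K (h phi) (h psi)"
    and "\<And>k phi. k \<in> base \<Longrightarrow> phi \<in> V \<Longrightarrow> h (vsmul K k phi) = vsmul K k (h phi)"
    and "\<And>e phi. e \<in> E1 \<Longrightarrow> phi \<in> V \<Longrightarrow> h (edge e phi) = edge e (h phi)"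
    and "\<And>e phi. e \<in> E1 \<Longrightarrow> phi \<in> V \<Longrightarrow> h (ghost e phi) = ghost e (h phi)"
  using assms unfolding is_endo_def extensional_def by auto

lemma inv_xb: "inv xb \<in> carrier K" "xb \<otimes> inv xb = \<one>" "inv xb \<otimes> xb = \<one>" "inv xb \<in> Units K"
  using xb_closed xb_nonzero field_Units by auto

lemma twist_closed:
  "(if e = e1 then xb else \<one>) \<in> carrier K" "(if e = e1 then inv xb else \<one>) \<in> carrier K"
  using xb_closed inv_xb by auto

lemma mu_in_P: "mu \<in> P"
  using cycle_inf_in_tail_class[OF cycle] .

lemma mu_edges: "mu i \<in> E1"
  using inf_path_cycle_inf[OF cycle] by (simp add: inf_path_def)

lemma P_edges: "p \<in> P \<Longrightarrow> p i \<in> E1" and P_linked: "p \<in> P \<Longrightarrow> r (p 0) = s (p 1)"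
  by (simp_all add: tail_class_def inf_path_def)

lemma V_memD:
  assumes "phi \<in> V"
  shows "phi p \<in> carrier K" and "p \<notin> P \<Longrightarrow> phi p = \<zero>" and "finite {p. phi p \<noteq> \<zero>}"
  using assms by (auto simp: Vcarrier_def)

lemma V_memI:
  assumes "\<And>p. phi p \<in> carrier K" and "\<And>p. p \<notin> P \<Longrightarrow> phi p = \<zero>"
    and "finite {p. phi p \<noteq> \<zero>}"
  shows "phi \<in> V"
  using assms by (auto simp: Vcarrier_def)

lemma V_pointwise_mem:
  assumes "phi \<in> V" and "\<And>p. psi p \<in> carrier K" and "\<And>p. phi p = \<zero> \<Longrightarrow> psi p = \<zero>"
  shows "psi \<in> V"
proof (rule V_memI)
  show "finite {p. psi p \<noteq> \<zero>}"
    using V_memD(3)[OF assms(1)] by (rule rev_finite_subset) (use assms(3) in blast)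
qed (use assms V_memD(2)[OF assms(1)] in auto)

lemma single_mu_in_V: "a \<in> carrier K \<Longrightarrow> single_mu a \<in> V"
  by (rule V_memI) (auto simp: single_mu_def mu_in_P)

lemma vadd_in_V:
  assumes "phi \<in> V" and "psi \<in> V"
  shows "vadd K phi psi \<in> V"
proof (rule V_memI)
  show "finite {p. vadd K phi psi p \<noteq> \<zero>}"
    using V_memD(3)[OF assms(1)] V_memD(3)[OF assms(2)]
    by (rule rev_finite_subset[OF finite_UnI]) (auto simp: vadd_def)
qed (use assms in \<open>auto simp: vadd_def V_memD\<close>)

lemma vsmul_in_V:
  assumes "a \<in> carrier K" and "phi \<in> V"
  shows "vsmul K a phi \<in> V"
  using assms(2) by (rule V_pointwise_mem) (use assms V_memD in \<open>auto simp: vsmul_def\<close>)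

lemma act_vertex_in_V:
  assumes "phi \<in> V"
  shows "act_vertex K s v phi \<in> V"
  using assms by (rule V_pointwise_mem) (use assms V_memD in \<open>auto simp: act_vertex_def\<close>)

lemma edge_in_V:
  assumes e: "e \<in> E1" and phi: "phi \<in> V"
  shows "edge e phi \<in> V"
proof (rule V_memI)
  fix p
  show "edge e phi p \<in> carrier K"
    using phi twist_closed by (auto simp: act_edge_def V_memD)
  assume p: "p \<notin> P"
  show "edge e phi p = \<zero>"
  proof (cases "p 0 = e \<and> r e = s (p 1)")
    case True
    then have "tail_from 1 p \<notin> P"
      using p tail_class_cons_path[of "tail_from 1 p" E1 r s mu e] e cons_path_tail_from[of p e]
      by (auto simp: tail_from_def)
    then show ?thesis using True phi twist_closed by (simp add: act_edge_def V_memD)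
  qed (auto simp: act_edge_def)
next
  have "{p. edge e phi p \<noteq> \<zero>} \<subseteq> cons_path e ` {p. phi p \<noteq> \<zero>}"
  proof
    fix p assume "p \<in> {p. edge e phi p \<noteq> \<zero>}"
    then have "p 0 = e" "phi (tail_from 1 p) \<noteq> \<zero>"
      using xb_closed by (auto simp: act_edge_def split: if_splits)
    then show "p \<in> cons_path e ` {p. phi p \<noteq> \<zero>}"
      using cons_path_tail_from[of p e] by force
  qed
  then show "finite {p. edge e phi p \<noteq> \<zero>}"
    using finite_surj[OF V_memD(3)[OF phi]] by blast
qed

lemma ghost_in_V:
  assumes phi: "phi \<in> V"
  shows "ghost e phi \<in> V"
proof (rule V_memI)
  fix p
  show "ghost e phi p \<in> carrier K"
    using phi twist_closed by (auto simp: act_ghost_def V_memD)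
  assume "p \<notin> P"
  then have "cons_path e p \<notin> P" using tail_class_cons_pathD[of e p] by blast
  then show "ghost e phi p = \<zero>" using phi twist_closed by (simp add: act_ghost_def V_memD)
next
  have "{p. ghost e phi p \<noteq> \<zero>} \<subseteq> tail_from 1 ` {p. phi p \<noteq> \<zero>}"
  proof
    fix p assume "p \<in> {p. ghost e phi p \<noteq> \<zero>}"
    then have "phi (cons_path e p) \<noteq> \<zero>"
      using inv_xb by (auto simp: act_ghost_def split: if_splits)
    then show "p \<in> tail_from 1 ` {p. phi p \<noteq> \<zero>}"
      by (metis (mono_tags, lifting) image_eqI mem_Collect_eq tail_from_1_cons_path)
  qed
  then show "finite {p. ghost e phi p \<noteq> \<zero>}"
    using finite_surj[OF V_memD(3)[OF phi]] by blast
qed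

text \<open>\<open>prefix_proj j n\<close> is the action of \<open>\<gamma>\<gamma>\<^sup>*\<close> for the path \<open>\<gamma>\<close> along \<open>mu\<close> of length
  \<open>n\<close> starting at position \<open>j\<close>; the twists of \<open>e\<^sub>1\<close> and \<open>e\<^sub>1\<^sup>*\<close> cancel.\<close>

definition prefix_proj :: "nat \<Rightarrow> nat \<Rightarrow> ((nat \<Rightarrow> 'e) \<Rightarrow> 'a) \<Rightarrow> ((nat \<Rightarrow> 'e) \<Rightarrow> 'a)" where
  "prefix_proj j n psi = (\<lambda>q. if \<forall>i<n. q i = mu (j + i) then psi q else \<zero>)"

lemma prefix_proj_in_V:
  assumes "psi \<in> V"
  shows "prefix_proj j n psi \<in> V"
  using assms by (rule V_pointwise_mem) (use assms V_memD in \<open>auto simp: prefix_proj_def\<close>)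

lemma prefix_proj_Suc:
  assumes psi: "psi \<in> V"
  shows "prefix_proj j (Suc n) psi = edge (mu j) (prefix_proj (Suc j) n (ghost (mu j) psi))"
proof
  fix q
  show "prefix_proj j (Suc n) psi q = edge (mu j) (prefix_proj (Suc j) n (ghost (mu j) psi)) q"
  proof (cases "q 0 = mu j")
    case False
    then show ?thesis by (auto simp: prefix_proj_def act_edge_def)
  next
    case q0: True
    have q: "cons_path (mu j) (tail_from 1 q) = q" using q0 by (rule cons_path_tail_from[of q])
    have prefix: "(\<forall>i<Suc n. q i = mu (j + i)) \<longleftrightarrow> (\<forall>i<n. tail_from 1 q i = mu (Suc j + i))"
      using q0 by (simp add: tail_from_def All_less_Suc2)
    show ?thesis
    proof (cases "psi q = \<zero>")
      case True
      then show ?thesis using q twist_closed by (auto simp: prefix_proj_def act_edge_def act_ghost_def)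
    next
      case False
      then have "q \<in> P" using V_memD(2)[OF psi] by blast
      then have "r (q 0) = s (q 1)" by (rule P_linked)
      moreover have "(if mu j = e1 then xb else \<one>) \<otimes> ((if mu j = e1 then inv xb else \<one>) \<otimes> psi q) = psi q"
        using inv_xb xb_closed V_memD(1)[OF psi] by (simp add: m_assoc[symmetric])
      ultimately show ?thesis
        using prefix q q0 xb_closed by (auto simp add: prefix_proj_def act_edge_def act_ghost_def)
    qed
  qed
qed

lemma endo_prefix_proj:
  assumes h: "is_endo h"
  shows "psi \<in> V \<Longrightarrow> h (prefix_proj j n psi) = prefix_proj j n (h psi)"
proof (induction n arbitrary: j psi)
  case 0
  then show ?case by (simp add: prefix_proj_def)
next
  case (Suc n)
  have ghost_psi: "ghost (mu j) psi \<in> V" using ghost_in_V Suc.prems by blast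
  have "h (prefix_proj j (Suc n) psi) = edge (mu j) (h (prefix_proj (Suc j) n (ghost (mu j) psi)))"
    using prefix_proj_Suc[OF Suc.prems] is_endoD(5)[OF h mu_edges prefix_proj_in_V[OF ghost_psi]]
    by simp
  also have "\<dots> = edge (mu j) (prefix_proj (Suc j) n (ghost (mu j) (h psi)))"
    using Suc.IH[OF ghost_psi] is_endoD(6)[OF h mu_edges Suc.prems] by simp
  also have "\<dots> = prefix_proj j (Suc n) (h psi)"
    using prefix_proj_Suc[OF is_endoD(1)[OF h Suc.prems]] by simp
  finally show ?case .
qed

lemma prefix_proj_eq_single_mu:
  assumes psi: "psi \<in> V"
  shows "\<exists>n. prefix_proj 0 n psi = single_mu (psi mu)"
proof -
  obtain n where n: "\<forall>q\<in>{q. psi q \<noteq> \<zero>} - {mu}. \<exists>i<n. q i \<noteq> mu i"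
    using finite_paths_separated_by_prefix[of "{q. psi q \<noteq> \<zero>} - {mu}" mu] V_memD(3)[OF psi]
    by blast
  have "prefix_proj 0 n psi q = single_mu (psi mu) q" for q
    using n by (cases "q = mu") (auto simp: prefix_proj_def single_mu_def)
  then show ?thesis by blast
qed

lemma endo_at_mu:
  assumes h: "is_endo h" and psi: "psi \<in> V"
  shows "h psi mu = mu_coeff h (psi mu)"
proof -
  obtain n where n: "prefix_proj 0 n psi = single_mu (psi mu)"
    using prefix_proj_eq_single_mu[OF psi] by blast
  have "h psi mu = prefix_proj 0 n (h psi) mu" by (simp add: prefix_proj_def)
  also have "\<dots> = mu_coeff h (psi mu)"
    using endo_prefix_proj[OF h psi, of 0 n] n by (simp add: mu_coeff_def)
  finally show ?thesis .
qed

text \<open>\<open>ghost_path p N\<close> is the action of \<open>(p\<^sub>0 \<cdots> p\<^sub>N\<^sub>-\<^sub>1)\<^sup>*\<close>; \<open>ghost_factor p N\<close> collects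
  the twists of the factors \<open>e\<^sub>1\<^sup>*\<close> in it.\<close>

primrec ghost_path :: "(nat \<Rightarrow> 'e) \<Rightarrow> nat \<Rightarrow> ((nat \<Rightarrow> 'e) \<Rightarrow> 'a) \<Rightarrow> ((nat \<Rightarrow> 'e) \<Rightarrow> 'a)" where
  "ghost_path p 0 psi = psi"
| "ghost_path p (Suc N) psi = ghost (p N) (ghost_path p N psi)"

primrec ghost_factor :: "(nat \<Rightarrow> 'e) \<Rightarrow> nat \<Rightarrow> 'a" where
  "ghost_factor p 0 = \<one>"
| "ghost_factor p (Suc N) = (if p N = e1 then inv xb else \<one>) \<otimes> ghost_factor p N"

lemma ghost_factor_Units: "ghost_factor p N \<in> Units K"
  by (induction N) (use inv_xb in auto)

lemma ghost_factor_closed: "ghost_factor p N \<in> carrier K"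
  using ghost_factor_Units by blast

lemma ghost_path_in_V: "psi \<in> V \<Longrightarrow> ghost_path p N psi \<in> V"
  by (induction N) (auto intro: ghost_in_V)

lemma ghost_path_tail_from:
  assumes "\<And>q. psi q \<in> carrier K"
  shows "ghost_path p N psi (tail_from N p) = ghost_factor p N \<otimes> psi p"
proof (induction N)
  case 0
  then show ?case using assms by simp
next
  case (Suc N)
  then show ?case
    using assms twist_closed ghost_factor_closed
    by (simp add: act_ghost_def cons_path_tail_from_Suc m_assoc)
qed

lemma endo_ghost_path:
  assumes h: "is_endo h" and p: "\<And>i. p i \<in> E1"
  shows "psi \<in> V \<Longrightarrow> h (ghost_path p N psi) = ghost_path p N (h psi)"
  by (induction N) (simp_all add: is_endoD(6)[OF h p] ghost_path_in_V)

text \<open>Since the sources along \<open>c\<close> are distinct, \<open>e\<^sub>1\<close> occurs exactly once in one period of \<open>mu\<close>.\<close>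

lemma ghost_factor_cycle: "0 < N \<Longrightarrow> N \<le> length c \<Longrightarrow> ghost_factor mu N = inv xb"
proof (induction N)
  case 0
  then show ?case by simp
next
  case (Suc N)
  have distinct: "distinct c" and c: "c \<noteq> []" using cycle by (auto simp: is_cycle_def distinct_map)
  have mu_N: "mu N = c ! N" using Suc.prems by (simp add: cycle_inf_def)
  show ?case
  proof (cases "N = 0")
    case True
    then show ?thesis using mu_N c inv_xb by (simp add: hd_conv_nth)
  next
    case False
    then have "mu N \<noteq> e1"
      using mu_N c Suc.prems nth_eq_iff_index_eq[OF distinct, of N 0] by (simp add: hd_conv_nth)
    then show ?thesis using Suc False inv_xb by simp
  qed
qed

lemma mu_coeff_closed: "is_endo h \<Longrightarrow> a \<in> carrier K \<Longrightarrow> mu_coeff h a \<in> carrier K"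
  unfolding mu_coeff_def using is_endoD(1) single_mu_in_V V_memD(1) by blast

lemma mu_coeff_add:
  assumes h: "is_endo h" and "a \<in> carrier K" "b \<in> carrier K"
  shows "mu_coeff h (a \<oplus> b) = mu_coeff h a \<oplus> mu_coeff h b"
proof -
  have "single_mu (a \<oplus> b) = vadd K (single_mu a) (single_mu b)"
    by (simp add: single_mu_def vadd_def fun_eq_iff)
  then show ?thesis
    using is_endoD(3)[OF h single_mu_in_V single_mu_in_V] assms
    by (simp add: mu_coeff_def vadd_def)
qed

lemma base_linear_scalars:
  assumes h: "is_endo h" and k: "k \<in> base"
  shows "k \<in> linear_scalars (mu_coeff h)"
  unfolding linear_scalars_def
proof (intro CollectI conjI ballI)
  show kc: "k \<in> carrier K" using k base_closed by blast
  fix a assume a: "a \<in> carrier K"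
  have "single_mu (k \<otimes> a) = vsmul K k (single_mu a)"
    using kc by (simp add: single_mu_def vsmul_def fun_eq_iff)
  then show "mu_coeff h (k \<otimes> a) = k \<otimes> mu_coeff h a"
    using is_endoD(4)[OF h k single_mu_in_V[OF a]] by (simp add: mu_coeff_def vsmul_def)
qed

lemma mu_coeff_ghost_path:
  assumes h: "is_endo h" and psi: "psi \<in> V" and p: "\<And>i. p i \<in> E1"
    and N: "tail_from N p = mu"
  shows "mu_coeff h (ghost_factor p N \<otimes> psi p) = ghost_factor p N \<otimes> h psi p"
proof -
  have "mu_coeff h (ghost_factor p N \<otimes> psi p) = h (ghost_path p N psi) mu"
    using endo_at_mu[OF h ghost_path_in_V[OF psi]] ghost_path_tail_from[of psi p N] N
      V_memD(1)[OF psi] by simp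
  also have "\<dots> = ghost_factor p N \<otimes> h psi p"
    using endo_ghost_path[OF h p psi] ghost_path_tail_from[of "h psi" p N] N
      V_memD(1)[OF is_endoD(1)[OF h psi]] by simp
  finally show ?thesis .
qed

text \<open>Going once around the cycle backwards multiplies by \<open>xb\<^sup>-\<^sup>1\<close>.\<close>

lemma inv_xb_linear_scalars:
  assumes h: "is_endo h"
  shows "inv xb \<in> linear_scalars (mu_coeff h)"
  unfolding linear_scalars_def
proof (intro CollectI conjI ballI)
  show "inv xb \<in> carrier K" by (rule inv_xb)
  fix a assume a: "a \<in> carrier K"
  have "tail_from (length c) mu = mu" using tail_from_cycle_inf[of c 1] by simp
  moreover have "ghost_factor mu (length c) = inv xb"
    using ghost_factor_cycle cycle by (simp add: is_cycle_def)
  ultimately show "mu_coeff h (inv xb \<otimes> a) = inv xb \<otimes> mu_coeff h a"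
    using mu_coeff_ghost_path[of h "single_mu a" mu "length c"] h single_mu_in_V[OF a] mu_edges
    by (simp add: single_mu_def mu_coeff_def)
qed

lemma mu_coeff_linear:
  assumes h: "is_endo h" and a: "a \<in> carrier K"
  shows "mu_coeff h a = a \<otimes> mu_coeff h \<one>"
proof -
  have "subring (linear_scalars (mu_coeff h)) K"
    using linear_scalars_subring mu_coeff_closed[OF h] mu_coeff_add[OF h] by blast
  moreover have "insert xb base \<subseteq> linear_scalars (mu_coeff h)"
    using base_linear_scalars[OF h] inv_xb_linear_scalars[OF h]
      linear_scalars_if_inv[OF mu_coeff_closed[OF h]] inv_xb(4) xb_closed xb_nonzero
    by (auto simp: field_Units)
  ultimately have "a \<in> linear_scalars (mu_coeff h)"
    using generated a generate_ring_min_subring1[of "insert xb base"] xb_closed base_closed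
    by blast
  then show ?thesis
    using a by (auto simp: linear_scalars_def dest: bspec[of _ _ \<one>])
qed

lemma endo_apply:
  assumes h: "is_endo h" and psi: "psi \<in> V"
  shows "h psi p = mu_coeff h \<one> \<otimes> psi p"
proof (cases "p \<in> P")
  case False
  then show ?thesis
    using V_memD(2)[OF psi] V_memD(2)[OF is_endoD(1)[OF h psi]] mu_coeff_closed[OF h] by simp
next
  case True
  obtain N where N: "tail_from N p = mu"
    using tail_class_reaches_cycle_inf[OF cycle True] by blast
  let ?g = "ghost_factor p N"
  have closed: "psi p \<in> carrier K" "h psi p \<in> carrier K" "mu_coeff h \<one> \<in> carrier K"
    using V_memD(1) psi is_endoD(1)[OF h psi] mu_coeff_closed[OF h] by auto
  have "?g \<otimes> h psi p = mu_coeff h (?g \<otimes> psi p)"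
    using mu_coeff_ghost_path[OF h psi P_edges[OF True] N] by simp
  also have "\<dots> = ?g \<otimes> (mu_coeff h \<one> \<otimes> psi p)"
    using mu_coeff_linear[OF h, of "?g \<otimes> psi p"] closed ghost_factor_closed by (simp add: m_ac)
  finally show ?thesis
    using Units_l_cancel[OF ghost_factor_Units] closed by simp
qed

lemma endo_eq_scalar_endo:
  assumes h: "is_endo h"
  shows "h = scalar_endo (mu_coeff h \<one>)"
proof
  fix psi
  show "h psi = scalar_endo (mu_coeff h \<one>) psi"
    using endo_apply[OF h] is_endoD(2)[OF h]
    by (cases "psi \<in> V") (auto simp: scalar_endo_def vsmul_def)
qed

lemma scalar_endo_is_endo:
  assumes a: "a \<in> carrier K"
  shows "is_endo (scalar_endo a)"
  unfolding is_endo_def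
proof (intro conjI ballI)
  show "scalar_endo a \<in> V \<rightarrow> V" using vsmul_in_V[OF a] by (simp add: scalar_endo_def)
  show "scalar_endo a \<in> extensional V" by (simp add: scalar_endo_def)
next
  fix phi psi assume p: "phi \<in> V" "psi \<in> V"
  show "scalar_endo a (vadd K phi psi) = vadd K (scalar_endo a phi) (scalar_endo a psi)"
    using p vadd_in_V[OF p] a V_memD(1)[OF p(1)] V_memD(1)[OF p(2)]
    by (simp add: scalar_endo_def vsmul_def vadd_def fun_eq_iff r_distr)
next
  fix k phi assume p: "k \<in> base" "phi \<in> V"
  then have k: "k \<in> carrier K" using base_closed by blast
  show "scalar_endo a (vsmul K k phi) = vsmul K k (scalar_endo a phi)"
    using p vsmul_in_V[OF k p(2)] a k V_memD(1)[OF p(2)]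
    by (simp add: scalar_endo_def vsmul_def fun_eq_iff m_lcomm)
next
  fix v phi assume p: "v \<in> E0" "phi \<in> V"
  show "scalar_endo a (act_vertex K s v phi) = act_vertex K s v (scalar_endo a phi)"
    using p act_vertex_in_V[OF p(2)] a
    by (simp add: scalar_endo_def vsmul_def act_vertex_def fun_eq_iff)
next
  fix e phi assume p: "e \<in> E1" "phi \<in> V"
  show "scalar_endo a (edge e phi) = edge e (scalar_endo a phi)"
    using p edge_in_V[OF p] a V_memD(1)[OF p(2)] twist_closed xb_closed
    by (auto simp add: scalar_endo_def vsmul_def act_edge_def fun_eq_iff m_lcomm)
next
  fix e phi assume p: "e \<in> E1" "phi \<in> V"
  show "scalar_endo a (ghost e phi) = ghost e (scalar_endo a phi)"
    using p ghost_in_V[OF p(2)] a V_memD(1)[OF p(2)] twist_closed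
    by (simp add: scalar_endo_def vsmul_def act_ghost_def fun_eq_iff m_lcomm)
qed

lemma mu_coeff_scalar_endo: "a \<in> carrier K \<Longrightarrow> mu_coeff (scalar_endo a) \<one> = a"
  using single_mu_in_V[OF one_closed] by (simp add: mu_coeff_def scalar_endo_def vsmul_def single_mu_def)

lemma End_ring_iso: "(\<lambda>h. mu_coeff h \<one>) \<in> ring_iso End_ring K"
proof -
  have single_one: "single_mu \<one> \<in> V" using single_mu_in_V by simp
  have "(\<lambda>h. mu_coeff h \<one>) \<in> ring_hom End_ring K"
  proof (rule ring_hom_memI)
    fix h assume "h \<in> carrier End_ring"
    then show "mu_coeff h \<one> \<in> carrier K" using mu_coeff_closed by (simp add: End_ring_def)
  next
    fix g h assume "g \<in> carrier End_ring" "h \<in> carrier End_ring"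
    then have g: "is_endo g" and h: "is_endo h" by (auto simp: End_ring_def)
    have "mu_coeff (g \<otimes>\<^bsub>End_ring\<^esub> h) \<one> = g (h (single_mu \<one>)) mu"
      using single_one by (simp add: End_ring_def mu_coeff_def compose_def)
    also have "\<dots> = mu_coeff g \<one> \<otimes> mu_coeff h \<one>"
      using endo_apply[OF g is_endoD(1)[OF h single_one]] by (simp add: mu_coeff_def)
    finally show "mu_coeff (g \<otimes>\<^bsub>End_ring\<^esub> h) \<one> = mu_coeff g \<one> \<otimes> mu_coeff h \<one>" .
  next
    fix g h assume "g \<in> carrier End_ring" "h \<in> carrier End_ring"
    show "mu_coeff (g \<oplus>\<^bsub>End_ring\<^esub> h) \<one> = mu_coeff g \<one> \<oplus> mu_coeff h \<one>"
      using single_one by (simp add: End_ring_def mu_coeff_def vadd_def)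
  next
    show "mu_coeff \<one>\<^bsub>End_ring\<^esub> \<one> = \<one>"
      using single_one by (simp add: End_ring_def mu_coeff_def single_mu_def)
  qed
  moreover have "bij_betw (\<lambda>h. mu_coeff h \<one>) (carrier End_ring) (carrier K)"
  proof (rule bij_betwI')
    fix g h assume "g \<in> carrier End_ring" "h \<in> carrier End_ring"
    then have "is_endo g" "is_endo h" by (auto simp: End_ring_def)
    then show "(mu_coeff g \<one> = mu_coeff h \<one>) = (g = h)"
      by (metis endo_eq_scalar_endo)
  next
    fix h assume "h \<in> carrier End_ring"
    then show "mu_coeff h \<one> \<in> carrier K" using mu_coeff_closed by (simp add: End_ring_def)
  next
    fix a assume a: "a \<in> carrier K"
    show "\<exists>h\<in>carrier End_ring. a = mu_coeff h \<one>"
    proof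
      show "scalar_endo a \<in> carrier End_ring"
        using scalar_endo_is_endo[OF a] by (simp add: End_ring_def)
    qed (simp add: mu_coeff_scalar_endo[OF a])
  qed
  ultimately show ?thesis by (simp add: ring_iso_def)
qed

end

lemma cycle_module_rupture:
  assumes "field R" and "is_cycle E1 r s c" and "f \<in> carrier (poly_ring R)" and "f \<noteq> []"
    and "last f = \<one>\<^bsub>R\<^esub>" and "pirreducible\<^bsub>R\<^esub> (carrier R) f"
  shows "cycle_module (Rupt\<^bsub>R\<^esub> (carrier R) f) E1 r s c (xbar R f) (Kemb R f ` carrier R)"
proof -
  interpret R: field R by fact
  let ?K' = "Rupt\<^bsub>R\<^esub> (carrier R) f" and ?surj = "R.rupture_surj (carrier R) f"
  have carrier: "subring (carrier R) R" by (rule R.carrier_is_subring)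
  interpret K': field ?K'
    using R.rupture_is_field_iff_pirreducible[OF R.carrier_is_subfield assms(3)] assms(6) by simp
  have embedding: "Kemb R f ` carrier R = (?surj \<circ> R.poly_of_const) ` carrier R"
    by (auto simp: Kemb_def)
  show ?thesis
  proof
    show "is_cycle E1 r s c" by fact
    show "xbar R f \<in> carrier ?K'"
      using ring_hom_memE(1)[OF R.rupture_surj_hom(1)[OF carrier assms(3)] R.var_closed(1)[OF carrier]]
      by (simp add: xbar_def)
    show "xbar R f \<noteq> \<zero>\<^bsub>?K'\<^esub>"
      using R.rupture_X_nonzero[OF carrier assms(3-5) K'.one_not_zero] by (simp add: xbar_def)
    show "Kemb R f ` carrier R \<subseteq> carrier ?K'"
      using ring_hom_memE(1)[OF R.rupture_surj_norm_is_hom[OF carrier assms(3)]] embedding by auto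
    show "carrier ?K' \<subseteq> generate_ring ?K' (insert (xbar R f) (Kemb R f ` carrier R))"
      using R.rupture_generated_by_X[OF carrier assms(3)] embedding by (simp add: xbar_def)
  qed
qed

theorem lemma2p2:
  fixes R :: "'a ring"
    and E0 :: "'v set" and E1 :: "'e set" and r s :: "'e \<Rightarrow> 'v"
    and c :: "'e list" and f :: "'a list"
  assumes "field R"
    and "is_graph E0 E1 r s"
    and "exclusive_cycle E1 r s c"
    and "f \<in> carrier (poly_ring R)"
    and "length f \<ge> 2"
    and "last f = \<one>\<^bsub>R\<^esub>"
    and "pirreducible\<^bsub>R\<^esub> (carrier R) f"
  shows "Vf_End_ring R E0 E1 r s c f \<simeq> Rupt\<^bsub>R\<^esub> (carrier R) f"
proof -
  have "is_cycle E1 r s c" using assms(3) by (simp add: exclusive_cycle_def)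
  moreover have "f \<noteq> []" using assms(5) by auto
  ultimately interpret cycle_module "Rupt\<^bsub>R\<^esub> (carrier R) f" E0 E1 r s c "xbar R f" "Kemb R f ` carrier R"
    using cycle_module_rupture assms(1,4,6,7) by blast
  have End_ring: "Vf_End_ring R E0 E1 r s c f = End_ring"
    by (simp add: Vf_End_ring_def Vf_End_def Vf_carrier_def End_ring_def is_endo_def Let_def)
  show ?thesis unfolding is_ring_iso_def End_ring using End_ring_iso by blast
qed

end
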